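(* Let $\kappa=\frac4{27}$ and let $a,b,c,d>0$. Then the recurrence coefficients defined in the context satisfy $\beta_n=3\kappa$, $\alpha_{n+1}=3\kappa^2$ and $\gamma_{n+1}=\kappa^3$ for all integers $n\ge1$ (i.e. the Jacobi matrix coincides with the banded Toeplitz matrix with diagonals $1,3\kappa,3\kappa^2,\kappa^3$ except possibly in its first column) if and only if $(a,b,c,d)$ is one of the twelve tuples $(\frac13,\frac23,\frac12,1)$, $(\frac23,\frac13,\frac12,1)$, $(\frac13,\frac23,1,\frac32)$, $(\frac23,\frac13,1,\frac32)$, $(\frac23,\frac43,1,\frac32)$, $(\frac43,\frac23,1,\frac32)$, $(\frac23,\frac43,\frac32,2)$, $(\frac43,\frac23,\frac32,2)$, $(\frac43,\frac53,\frac32,2)$, $(\frac53,\frac43,\frac32,2)$, $(\frac43,\frac53,2,\frac52)$, $(\frac53,\frac43,2,\frac52)$.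
   Context: Let $c_{-1}=c$ and for $k\ge0$ $c_{2k}=d+k$, $c_{2k+1}=c+k+1$. Put $\lambda_0=\lambda_1=0$, and for $n\ge1$: $\lambda_{3n}=\frac{n(b+n-1)(c_n-a-1)}{(c_n+n-2)(c_n+n-1)(c_{n-1}+n-1)}$, $\lambda_{3n+1}=\frac{n(a+n)(c_{n-1}-b)}{(c_n+n-1)(c_{n-1}+n-1)(c_{n-1}+n)}$; for $n\ge0$: $\lambda_{3n+2}=\frac{(a+n)(b+n)(c_n-1)}{(c_n+n-1)(c_n+n)(c_{n-1}+n)}$. For $n\ge0$: $\beta_n=\lambda_{3n}+\lambda_{3n+1}+\lambda_{3n+2}$, $\alpha_{n+1}=(\lambda_{3n+1}+\lambda_{3n+2})\lambda_{3n+3}+\lambda_{3n+2}\lambda_{3n+4}$, $\gamma_{n+1}=\lambda_{3n+2}\lambda_{3n+4}\lambda_{3n+6}$. These are the entries of the Jacobi matrix $J$ ($J_{n,n+1}=1$, $J_{n,n}=\beta_n$, $J_{n+1,n}=\alpha_{n+1}$, $J_{n+2,n}=\gamma_{n+1}$) of the hypergeometric multiple orthogonal polynomials with parameters $(a,b,c,d)$. *)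

theory Defs
  imports Complex_Main
begin

text \<open>The sequence c_k for k \<ge> -1: c_{-1} = c, c_{2k} = d + k, c_{2k+1} = c + k + 1.
  Note c_{-1} = c agrees with the odd formula c + (k+1)/2 at k = -1.\<close>
definition cseq :: "real \<Rightarrow> real \<Rightarrow> int \<Rightarrow> real" where
  "cseq c d k = (if even k then d + real_of_int (k div 2) else c + real_of_int ((k + 1) div 2))"

definition lam :: "real \<Rightarrow> real \<Rightarrow> real \<Rightarrow> real \<Rightarrow> nat \<Rightarrow> real" where
  "lam a b c d m =
    (let n = m div 3; r = m mod 3; rn = real n;
         cn = cseq c d (int n); cn1 = cseq c d (int n - 1) in
     if m = 0 \<or> m = 1 then 0
     else if r = 0 then
       rn * (b + rn - 1) * (cn - a - 1) / ((cn + rn - 2) * (cn + rn - 1) * (cn1 + rn - 1))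
     else if r = 1 then
       rn * (a + rn) * (cn1 - b) / ((cn + rn - 1) * (cn1 + rn - 1) * (cn1 + rn))
     else
       (a + rn) * (b + rn) * (cn - 1) / ((cn + rn - 1) * (cn + rn) * (cn1 + rn)))"

definition beta_rc :: "real \<Rightarrow> real \<Rightarrow> real \<Rightarrow> real \<Rightarrow> nat \<Rightarrow> real" where
  "beta_rc a b c d n = lam a b c d (3*n) + lam a b c d (3*n+1) + lam a b c d (3*n+2)"

definition alpha_rc :: "real \<Rightarrow> real \<Rightarrow> real \<Rightarrow> real \<Rightarrow> nat \<Rightarrow> real" where
  "alpha_rc a b c d n = (lam a b c d (3*(n-1)+1) + lam a b c d (3*(n-1)+2)) * lam a b c d (3*(n-1)+3)
      + lam a b c d (3*(n-1)+2) * lam a b c d (3*(n-1)+4)"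
  \<comment> \<open>alpha_{n+1} for n \<ge> 0, i.e. meaningful for index \<ge> 1\<close>

definition gamma_rc :: "real \<Rightarrow> real \<Rightarrow> real \<Rightarrow> real \<Rightarrow> nat \<Rightarrow> real" where
  "gamma_rc a b c d n = lam a b c d (3*(n-1)+2) * lam a b c d (3*(n-1)+4) * lam a b c d (3*(n-1)+6)"
  \<comment> \<open>gamma_{n+1} for n \<ge> 0, i.e. meaningful for index \<ge> 1\<close>

end

theory Submission
  imports Defs "HOL-Computational_Algebra.Polynomial"
begin

text \<open>
  Write \<open>c\<^sub>m = u + m/2\<close> and \<open>c\<^sub>m\<^sub>-\<^sub>1 = v + m/2\<close>: the offsets \<open>(u, v)\<close> are \<open>(d, c)\<close> for even
  and \<open>(c + 1/2, d - 1/2)\<close> for odd \<open>m\<close>. So \<open>\<lambda>\<^sub>3\<^sub>n\<^sub>+\<^sub>j\<close> (\<open>j = 0, \<dots>, 6\<close>) is a ratio of two cubic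
  polynomials in \<open>n/2\<close> whose coefficients are the same for all even \<open>n\<close>, and for all \<open>n\<close>
  when \<open>d = c + 1/2\<close>; clearing denominators turns the conditions on \<open>\<beta>\<^sub>n, \<alpha>\<^sub>n\<^sub>+\<^sub>1, \<gamma>\<^sub>n\<^sub>+\<^sub>1\<close>
  into polynomial identities. If the conditions hold, the cleared polynomials for \<open>\<beta>\<close> and
  \<open>\<gamma>\<close> vanish at every positive integer, hence identically. Their leading coefficients
  force \<open>d = c + 1/2\<close> and then three equations in \<open>a, b, c\<close> whose solutions are the twelve
  tuples. Conversely, for these tuples the cleared polynomials are zero by computation.
\<close>

definition toeplitz_recurrence :: "real \<Rightarrow> real \<Rightarrow> real \<Rightarrow> real \<Rightarrow> bool" where
  "toeplitz_recurrence a b c d \<longleftrightarrow> (\<forall>n::nat. n \<ge> 1 \<longrightarrow>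
      beta_rc a b c d n = 3 * (4/27) \<and>
      alpha_rc a b c d (n+1) = 3 * (4/27)^2 \<and>
      gamma_rc a b c d (n+1) = (4/27)^3)"

definition toeplitz_params :: "(real \<times> real \<times> real \<times> real) set" where
  "toeplitz_params = {(1/3, 2/3, 1/2, 1), (2/3, 1/3, 1/2, 1),
                      (1/3, 2/3, 1, 3/2), (2/3, 1/3, 1, 3/2),
                      (2/3, 4/3, 1, 3/2), (4/3, 2/3, 1, 3/2),
                      (2/3, 4/3, 3/2, 2), (4/3, 2/3, 3/2, 2),
                      (4/3, 5/3, 3/2, 2), (5/3, 4/3, 3/2, 2),
                      (4/3, 5/3, 2, 5/2), (5/3, 4/3, 2, 5/2)}"

definition cbase :: "real \<Rightarrow> real \<Rightarrow> nat \<Rightarrow> real" where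
  "cbase c d m = (if even m then d else c + 1/2)"

definition cbase_prev :: "real \<Rightarrow> real \<Rightarrow> nat \<Rightarrow> real" where
  "cbase_prev c d m = (if even m then c else d - 1/2)"

lemma cseq_eq_cbase: "cseq c d (int m) = cbase c d m + real m / 2"
  by (cases "even m") (auto simp: cseq_def cbase_def field_simps elim!: evenE oddE)

lemma cseq_prev_eq_cbase_prev: "cseq c d (int m - 1) = cbase_prev c d m + real m / 2"
  by (cases "even m") (auto simp: cseq_def cbase_prev_def field_simps elim!: evenE oddE)

lemma cbase_add_period:
  assumes "even n \<or> d = c + 1/2"
  shows "cbase c d (n + m) = cbase c d m" and "cbase_prev c d (n + m) = cbase_prev c d m"
  using assms by (auto simp: cbase_def cbase_prev_def)

definition lam_num :: "real \<Rightarrow> real \<Rightarrow> real \<Rightarrow> real \<Rightarrow> nat \<Rightarrow> nat \<Rightarrow> real poly" where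
  "lam_num a b c d m r =
     (let u = cbase c d m; v = cbase_prev c d m in
      if r = 0 then [:0, 2:] * [:b - 1, 2:] * [:u - a - 1, 1:]
      else if r = 1 then [:0, 2:] * [:a, 2:] * [:v - b, 1:]
      else [:a, 2:] * [:b, 2:] * [:u - 1, 1:])"

definition lam_den :: "real \<Rightarrow> real \<Rightarrow> nat \<Rightarrow> nat \<Rightarrow> real poly" where
  "lam_den c d m r =
     (let u = cbase c d m; v = cbase_prev c d m in
      if r = 0 then [:u - 2, 3:] * [:u - 1, 3:] * [:v - 1, 3:]
      else if r = 1 then [:u - 1, 3:] * [:v - 1, 3:] * [:v, 3:]
      else [:u - 1, 3:] * [:u, 3:] * [:v, 3:])"

lemma lam_eq_poly_ratio:
  assumes "r < 3"
  shows "lam a b c d (3*m + r) = poly (lam_num a b c d m r) (m/2) / poly (lam_den c d m r) (m/2)"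
  \<comment> \<open>this includes \<open>m = 0\<close>, where the factor \<open>[:0, 2:]\<close> accounts for \<open>\<lambda>\<^sub>0 = \<lambda>\<^sub>1 = 0\<close>\<close>
proof -
  have q: "(3*m + r) div 3 = m" and r: "(3*m + r) mod 3 = r" using assms by auto
  define x where "x = real m / 2"
  have m: "real m = 2 * x" by (simp add: x_def)
  have cn: "cseq c d (int m) = cbase c d m + x" "cseq c d (int m - 1) = cbase_prev c d m + x"
    by (simp_all add: cseq_eq_cbase cseq_prev_eq_cbase_prev x_def)
  consider "r = 0" | "r = 1" | "r = 2" using assms by linarith
  then show ?thesis
    unfolding lam_def lam_num_def lam_den_def Let_def q r x_def[symmetric] cn m poly_mult
    by cases (use m in \<open>auto simp: algebra_simps\<close>)
qed

lemma lam_den_pos: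
  assumes "0 < c" "0 < d" "1 \<le> m"
  shows "0 < poly (lam_den c d m r) (m/2)"
proof -
  have "2 \<le> m" if "even m" using assms that by presburger
  with assms show ?thesis
    unfolding lam_den_def Let_def cbase_def cbase_prev_def if_distrib[of "\<lambda>p. poly p (m/2)"] poly_mult
    by (auto intro!: mult_pos_pos)
qed

definition lam_num_shift :: "real \<Rightarrow> real \<Rightarrow> real \<Rightarrow> real \<Rightarrow> nat \<Rightarrow> real poly" where
  "lam_num_shift a b c d j = lam_num a b c d (j div 3) (j mod 3) \<circ>\<^sub>p [:real (j div 3) / 2, 1:]"

definition lam_den_shift :: "real \<Rightarrow> real \<Rightarrow> nat \<Rightarrow> real poly" where
  "lam_den_shift c d j = lam_den c d (j div 3) (j mod 3) \<circ>\<^sub>p [:real (j div 3) / 2, 1:]"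

lemmas lam_shift_defs =
  lam_num_shift_def lam_den_shift_def lam_num_def lam_den_def cbase_def cbase_prev_def

lemma poly_lam_shift:
  assumes "even n \<or> d = c + 1/2"
  shows "poly (lam_num_shift a b c d j) (n/2) =
           poly (lam_num a b c d (n + j div 3) (j mod 3)) (real (n + j div 3) / 2)"
    and "poly (lam_den_shift c d j) (n/2) =
           poly (lam_den c d (n + j div 3) (j mod 3)) (real (n + j div 3) / 2)"
  unfolding lam_num_shift_def lam_den_shift_def poly_pcompose lam_num_def lam_den_def
    cbase_add_period[OF assms]
  by (simp_all add: add_divide_distrib add.commute)

lemma lam_eq_shift_ratio:
  assumes "even n \<or> d = c + 1/2"
  shows "lam a b c d (3*n + j) = poly (lam_num_shift a b c d j) (n/2) / poly (lam_den_shift c d j) (n/2)"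
proof -
  have j: "3*n + j = 3*(n + j div 3) + j mod 3" by simp
  show ?thesis
    unfolding j poly_lam_shift[OF assms] by (rule lam_eq_poly_ratio) simp
qed

lemma lam_den_shift_pos:
  fixes n :: nat
  assumes "0 < c" "0 < d" "1 \<le> n" "even n \<or> d = c + 1/2"
  shows "0 < poly (lam_den_shift c d j) (n/2)"
  using lam_den_pos[OF assms(1,2), where m = "n + j div 3"] assms(3)
  by (simp add: poly_lam_shift(2)[OF assms(4)])

text \<open>With \<open>\<kappa> = 4/27\<close>: \<open>3\<kappa> = 4/9\<close>, \<open>3\<kappa>\<^sup>2 = 16/243\<close> and \<open>\<kappa>\<^sup>3 = 64/19683\<close>.\<close>

definition beta_clear :: "(nat \<Rightarrow> 'a::comm_ring_1) \<Rightarrow> (nat \<Rightarrow> 'a) \<Rightarrow> 'a" where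
  "beta_clear f g = 9 * (f 0 * g 1 * g 2 + f 1 * g 0 * g 2 + f 2 * g 0 * g 1) - 4 * (g 0 * g 1 * g 2)"

definition alpha_clear :: "(nat \<Rightarrow> 'a::comm_ring_1) \<Rightarrow> (nat \<Rightarrow> 'a) \<Rightarrow> 'a" where
  "alpha_clear f g = 243 * ((f 1 * g 2 + f 2 * g 1) * f 3 * g 4 + f 2 * f 4 * g 1 * g 3)
     - 16 * (g 1 * g 2 * g 3 * g 4)"

definition gamma_clear :: "(nat \<Rightarrow> 'a::comm_ring_1) \<Rightarrow> (nat \<Rightarrow> 'a) \<Rightarrow> 'a" where
  "gamma_clear f g = 19683 * (f 2 * f 4 * f 6) - 64 * (g 2 * g 4 * g 6)"

lemma poly_clear:
  "poly (beta_clear F G) x = beta_clear (\<lambda>j. poly (F j) x) (\<lambda>j. poly (G j) x)"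
  "poly (alpha_clear F G) x = alpha_clear (\<lambda>j. poly (F j) x) (\<lambda>j. poly (G j) x)"
  "poly (gamma_clear F G) x = gamma_clear (\<lambda>j. poly (F j) x) (\<lambda>j. poly (G j) x)"
  by (simp_all add: beta_clear_def alpha_clear_def gamma_clear_def)

lemma clear_scale:
  "beta_clear (\<lambda>j. s * f j) (\<lambda>j. s * g j) = s^3 * beta_clear f g"
  "gamma_clear (\<lambda>j. s * f j) (\<lambda>j. s * g j) = s^3 * gamma_clear f g"
  by (simp_all add: beta_clear_def gamma_clear_def power3_eq_cube algebra_simps)

lemma ratio_eq_iff_clear:
  fixes f g :: "nat \<Rightarrow> 'a::field_char_0"
  assumes "\<And>j. g j \<noteq> 0"
  shows "f 0 / g 0 + f 1 / g 1 + f 2 / g 2 = 3 * (4/27) \<longleftrightarrow> beta_clear f g = 0"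
    and "(f 1 / g 1 + f 2 / g 2) * (f 3 / g 3) + f 2 / g 2 * (f 4 / g 4) = 3 * (4/27)^2
           \<longleftrightarrow> alpha_clear f g = 0"
    and "f 2 / g 2 * (f 4 / g 4) * (f 6 / g 6) = (4/27)^3 \<longleftrightarrow> gamma_clear f g = 0"
  using assms by (simp_all add: beta_clear_def alpha_clear_def gamma_clear_def field_simps)

lemma rc_eq_iff_clear:
  fixes a b :: real
  assumes "0 < c" "0 < d" "1 \<le> n" "even n \<or> d = c + 1/2"
  defines "f \<equiv> \<lambda>j. poly (lam_num_shift a b c d j) (n/2)" and "g \<equiv> \<lambda>j. poly (lam_den_shift c d j) (n/2)"
  shows "beta_rc a b c d n = 3 * (4/27) \<longleftrightarrow> beta_clear f g = 0"
    and "alpha_rc a b c d (n+1) = 3 * (4/27)^2 \<longleftrightarrow> alpha_clear f g = 0"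
    and "gamma_rc a b c d (n+1) = (4/27)^3 \<longleftrightarrow> gamma_clear f g = 0"
proof -
  have lam: "lam a b c d (3*n + j) = f j / g j" for j
    unfolding f_def g_def by (rule lam_eq_shift_ratio[OF assms(4)])
  have g: "g j \<noteq> 0" for j
    using lam_den_shift_pos[OF assms(1-4)] unfolding g_def by (metis less_irrefl)
  have beta: "beta_rc a b c d n = f 0 / g 0 + f 1 / g 1 + f 2 / g 2"
    using lam[of 0] lam[of 1] lam[of 2] by (simp add: beta_rc_def)
  have alpha: "alpha_rc a b c d (n+1) = (f 1 / g 1 + f 2 / g 2) * (f 3 / g 3) + f 2 / g 2 * (f 4 / g 4)"
    using lam[of 1] lam[of 2] lam[of 3] lam[of 4] by (simp add: alpha_rc_def)
  have gamma: "gamma_rc a b c d (n+1) = f 2 / g 2 * (f 4 / g 4) * (f 6 / g 6)"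
    using lam[of 2] lam[of 4] lam[of 6] by (simp add: gamma_rc_def)
  show "beta_rc a b c d n = 3 * (4/27) \<longleftrightarrow> beta_clear f g = 0"
    unfolding beta by (rule ratio_eq_iff_clear(1)) (fact g)
  show "alpha_rc a b c d (n+1) = 3 * (4/27)^2 \<longleftrightarrow> alpha_clear f g = 0"
    unfolding alpha by (rule ratio_eq_iff_clear(2)) (fact g)
  show "gamma_rc a b c d (n+1) = (4/27)^3 \<longleftrightarrow> gamma_clear f g = 0"
    unfolding gamma by (rule ratio_eq_iff_clear(3)) (fact g)
qed

section \<open>Sufficiency\<close>

lemma toeplitz_recurrence_if_clear_eq_0:
  assumes "0 < c" "d = c + 1/2"
    and "beta_clear (lam_num_shift a b c d) (lam_den_shift c d) = 0"
    and "alpha_clear (lam_num_shift a b c d) (lam_den_shift c d) = 0"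
    and "gamma_clear (lam_num_shift a b c d) (lam_den_shift c d) = 0"
  shows "toeplitz_recurrence a b c d"
  unfolding toeplitz_recurrence_def
proof (intro allI impI)
  fix n :: nat
  assume n: "1 \<le> n"
  have d: "0 < d" using assms(1,2) by simp
  let ?f = "\<lambda>j. poly (lam_num_shift a b c d j) (n/2)" and ?g = "\<lambda>j. poly (lam_den_shift c d j) (n/2)"
  have "beta_clear ?f ?g = 0" "alpha_clear ?f ?g = 0" "gamma_clear ?f ?g = 0"
    using assms(3-5) by (simp_all only: poly_clear[symmetric] poly_0)
  then show "beta_rc a b c d n = 3 * (4/27) \<and> alpha_rc a b c d (n+1) = 3 * (4/27)^2 \<and>
      gamma_rc a b c d (n+1) = (4/27)^3"
    unfolding rc_eq_iff_clear[OF assms(1) d n disjI2[OF assms(2)]] by blast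
qed

lemma toeplitz_recurrence_if_params:
  assumes "(a, b, c, d) \<in> toeplitz_params"
  shows "toeplitz_recurrence a b c d"
proof -
  have "\<forall>(a, b, c, d) \<in> toeplitz_params. toeplitz_recurrence a b c d"
    unfolding toeplitz_params_def ball_simps prod.case
    by (intro conjI TrueI; rule toeplitz_recurrence_if_clear_eq_0;
        simp add: beta_clear_def alpha_clear_def gamma_clear_def lam_shift_defs pcompose_pCons numeral_poly)
  with assms show ?thesis by blast
qed

section \<open>Necessity\<close>

lemma poly_eq_0_if_vanishing:
  fixes p :: "'a::idom poly"
  assumes "infinite S" "\<And>x. x \<in> S \<Longrightarrow> poly p x = 0"
  shows "p = 0"
proof (rule ccontr)
  assume "p \<noteq> 0"
  then have "finite {x. poly p x = 0}" by (rule poly_roots_finite)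
  moreover have "S \<subseteq> {x. poly p x = 0}" using assms(2) by blast
  ultimately show False using assms(1) finite_subset by blast
qed

lemma clear_eq_0_if_toeplitz_recurrence:
  assumes "0 < c" "0 < d" "toeplitz_recurrence a b c d"
  shows "beta_clear (lam_num_shift a b c d) (lam_den_shift c d) = 0"
    and "gamma_clear (lam_num_shift a b c d) (lam_den_shift c d) = 0"
proof -
  have "infinite (real ` {1..})"
    by (simp add: finite_image_iff infinite_Ici)
  moreover have "poly (beta_clear (lam_num_shift a b c d) (lam_den_shift c d)) x = 0 \<and>
      poly (gamma_clear (lam_num_shift a b c d) (lam_den_shift c d)) x = 0" if "x \<in> real ` {1..}" for x
  proof -
    from that obtain k where k: "1 \<le> k" "x = real k" by auto
    then have x: "real (2*k) / 2 = x" by simp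
    show ?thesis
      using assms(3) rc_eq_iff_clear[OF assms(1,2), of "2*k" a b] k(1) unfolding x
      by (simp add: toeplitz_recurrence_def poly_clear)
  qed
  ultimately show "beta_clear (lam_num_shift a b c d) (lam_den_shift c d) = 0"
    and "gamma_clear (lam_num_shift a b c d) (lam_den_shift c d) = 0"
    by (auto intro: poly_eq_0_if_vanishing)
qed

lemma degree_lam_shift: "degree (lam_num_shift a b c d j) = 3" "degree (lam_den_shift c d j) = 3"
  by (simp_all add: lam_shift_defs Let_def degree_pcompose degree_mult_eq)

text \<open>The leading coefficients of the cleared polynomials are the low coefficients of their
  reflections, which are cheap to compute.\<close>

lemma reflect_clear_eq_0:
  fixes F G :: "nat \<Rightarrow> real poly"
  assumes "\<And>j. degree (F j) = 3" "\<And>j. degree (G j) = 3"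
  shows "beta_clear F G = 0 \<Longrightarrow> beta_clear (reflect_poly \<circ> F) (reflect_poly \<circ> G) = 0"
    and "gamma_clear F G = 0 \<Longrightarrow> gamma_clear (reflect_poly \<circ> F) (reflect_poly \<circ> G) = 0"
proof -
  have infinite: "infinite (- {0::real})"
    by (simp add: infinite_UNIV_char_0 Compl_eq_Diff_UNIV)
  have reflect: "poly ((reflect_poly \<circ> H) j) x = x^3 * poly (H j) (inverse x)"
    if "x \<noteq> 0" "\<And>j. degree (H j) = 3" for H :: "nat \<Rightarrow> real poly" and j x
    using that by (simp add: poly_reflect_poly_nz)
  have "poly (beta_clear (reflect_poly \<circ> F) (reflect_poly \<circ> G)) x =
      (x^3)^3 * poly (beta_clear F G) (inverse x)"
    and "poly (gamma_clear (reflect_poly \<circ> F) (reflect_poly \<circ> G)) x =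
      (x^3)^3 * poly (gamma_clear F G) (inverse x)" if x: "x \<noteq> 0" for x
    by (simp_all only: poly_clear reflect[OF x assms(1)] reflect[OF x assms(2)] clear_scale)
  then show "beta_clear F G = 0 \<Longrightarrow> beta_clear (reflect_poly \<circ> F) (reflect_poly \<circ> G) = 0"
    and "gamma_clear F G = 0 \<Longrightarrow> gamma_clear (reflect_poly \<circ> F) (reflect_poly \<circ> G) = 0"
    by (auto intro: poly_eq_0_if_vanishing[OF infinite])
qed

lemma pcompose_linear_shift:
  fixes \<alpha> \<beta> s :: "'a::comm_ring_1"
  shows "[:\<alpha>, \<beta>:] \<circ>\<^sub>p [:s, 1:] = [:\<alpha> + \<beta> * s, \<beta>:]"
  by (simp add: pcompose_pCons)

lemma reflect_poly_linear:
  assumes "\<beta> \<noteq> 0"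
  shows "reflect_poly [:\<alpha>, \<beta>:] = [:\<beta>, \<alpha>:]"
  using assms by (simp add: reflect_poly_def)

lemma linear_product3:
  fixes u1 u2 u3 v1 v2 v3 :: "'a::comm_ring_1"
  shows "[:v1, u1:] * [:v2, u2:] * [:v3, u3:] =
     [:v1*v2*v3, u1*v2*v3 + v1*u2*v3 + v1*v2*u3, u1*u2*v3 + u1*v2*u3 + v1*u2*u3, u1*u2*u3:]"
  by (simp add: algebra_simps)

lemma coeff_triple_product:
  fixes p q r :: "'a::comm_ring_1 poly"
  shows "coeff (p * q * r) 1 = coeff p 0 * coeff q 0 * coeff r 1 + coeff p 0 * coeff q 1 * coeff r 0
            + coeff p 1 * coeff q 0 * coeff r 0"
  and "coeff (p * q * r) 2 = coeff p 0 * coeff q 0 * coeff r 2 + coeff p 0 * coeff q 1 * coeff r 1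
            + coeff p 0 * coeff q 2 * coeff r 0 + coeff p 1 * coeff q 0 * coeff r 1
            + coeff p 1 * coeff q 1 * coeff r 0 + coeff p 2 * coeff q 0 * coeff r 0"
  and "coeff (p * q * r) 3 = coeff p 0 * coeff q 0 * coeff r 3 + coeff p 0 * coeff q 1 * coeff r 2
            + coeff p 0 * coeff q 2 * coeff r 1 + coeff p 0 * coeff q 3 * coeff r 0
            + coeff p 1 * coeff q 0 * coeff r 2 + coeff p 1 * coeff q 1 * coeff r 1
            + coeff p 1 * coeff q 2 * coeff r 0 + coeff p 2 * coeff q 0 * coeff r 1
            + coeff p 2 * coeff q 1 * coeff r 0 + coeff p 3 * coeff q 0 * coeff r 0"
  by (simp_all add: coeff_mult numeral_2_eq_2 numeral_3_eq_3 algebra_simps)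

lemmas coeff_reflect_clear_simps =
  beta_clear_def gamma_clear_def lam_shift_defs pcompose_mult pcompose_linear_shift
  reflect_poly_mult reflect_poly_linear

lemma coeff_reflect_beta_clear_1:
  "coeff (beta_clear (reflect_poly \<circ> lam_num_shift a b c d) (reflect_poly \<circ> lam_den_shift c d)) 1 =
     8748 * (d - c - 1/2)"
  \<comment> \<open>the products are kept factored, so that only the needed coefficients get expanded\<close>
  by (simp del: mult_pCons_left mult_pCons_right add: coeff_reflect_clear_simps,
      simp only: linear_product3 coeff_diff coeff_add numeral_mult_conv_smult coeff_smult
        coeff_triple_product,
      simp add: algebra_simps)

lemma coeff_reflect_clear_2_3:
  fixes a b c :: real
  defines "F \<equiv> reflect_poly \<circ> lam_num_shift a b c (c + 1/2)"
    and "G \<equiv> reflect_poly \<circ> lam_den_shift c (c + 1/2)"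
  shows "coeff (beta_clear F G) 2 = 2187 * ((12*c - 6) * (a + b) - 12*c^2 + 6*c + 2 - 9*a*b)"
    and "coeff (beta_clear F G) 3 =
           729 * (24 * (a + b) * (3*c^2 - 3*c + 1) - 9*a*b * (5*c - 1) - 76*c^3 + 78*c^2 - 10*c - 8)"
    and "coeff (gamma_clear F G) 2 = 104976 * ((12*c + 3) * (a + b) - 9 * (a^2 + b^2) - 12*c^2 + 6*c - 4)"
  unfolding F_def G_def
  by (simp_all del: mult_pCons_left mult_pCons_right add: coeff_reflect_clear_simps,
      simp_all only: linear_product3 coeff_diff coeff_add numeral_mult_conv_smult coeff_smult
        coeff_triple_product,
      simp_all add: numeral_2_eq_2 numeral_3_eq_3 power2_eq_square power3_eq_cube field_simps)

lemma toeplitz_params_if_coeff_equations: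
  fixes a b c :: real
  assumes ab: "9*a*b = (12*c - 6) * (a + b) - 12*c^2 + 6*c + 2"
    and sq: "9 * (a^2 + b^2) = (12*c + 3) * (a + b) - 12*c^2 + 6*c - 4"
    and cub: "9*a*b * (5*c - 1) = 24 * (a + b) * (3*c^2 - 3*c + 1) - 76*c^3 + 78*c^2 - 10*c - 8"
  shows "(a, b, c, c + 1/2) \<in> toeplitz_params"
proof -
  have sum: "(a + b - 2*c) * (a + b - 2*c + 1) = 0"
    using ab sq by algebra
  have "b = 2*c - a \<and> (c = 1/2 \<or> c = 1 \<or> c = 3/2) \<or> b = 2*c - 1 - a \<and> (c = 1 \<or> c = 3/2 \<or> c = 2)"
  proof (cases "b = 2*c - a")
    case True
    then have "(2*c - 1) * (c - 1) * (2*c - 3) = 0" using ab cub by algebra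
    with True show ?thesis unfolding mult_eq_0_iff by arith
  next
    case False
    with sum have b: "b = 2*c - 1 - a" unfolding mult_eq_0_iff by arith
    then have "(c - 1) * (2*c - 3) * (c - 2) = 0" using ab cub by algebra
    with b show ?thesis unfolding mult_eq_0_iff by arith
  qed
  then consider
      "b = 2*c - a" "c = 1/2" | "b = 2*c - a" "c = 1" | "b = 2*c - a" "c = 3/2"
    | "b = 2*c - 1 - a" "c = 1" | "b = 2*c - 1 - a" "c = 3/2" | "b = 2*c - 1 - a" "c = 2"
    by blast
  then show ?thesis
  proof cases
    case 1
    then have "(3*a - 1) * (3*a - 2) = 0" using ab by algebra
    then have "a = 1/3 \<or> a = 2/3" unfolding mult_eq_0_iff by arith
    with 1 show ?thesis by (auto simp: toeplitz_params_def)
  next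
    case 2
    then have "(3*a - 2) * (3*a - 4) = 0" using ab by algebra
    then have "a = 2/3 \<or> a = 4/3" unfolding mult_eq_0_iff by arith
    with 2 show ?thesis by (auto simp: toeplitz_params_def)
  next
    case 3
    then have "(3*a - 4) * (3*a - 5) = 0" using ab by algebra
    then have "a = 4/3 \<or> a = 5/3" unfolding mult_eq_0_iff by arith
    with 3 show ?thesis by (auto simp: toeplitz_params_def)
  next
    case 4
    then have "(3*a - 1) * (3*a - 2) = 0" using ab by algebra
    then have "a = 1/3 \<or> a = 2/3" unfolding mult_eq_0_iff by arith
    with 4 show ?thesis by (auto simp: toeplitz_params_def)
  next
    case 5
    then have "(3*a - 2) * (3*a - 4) = 0" using ab by algebra
    then have "a = 2/3 \<or> a = 4/3" unfolding mult_eq_0_iff by arith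
    with 5 show ?thesis by (auto simp: toeplitz_params_def)
  next
    case 6
    then have "(3*a - 4) * (3*a - 5) = 0" using ab by algebra
    then have "a = 4/3 \<or> a = 5/3" unfolding mult_eq_0_iff by arith
    with 6 show ?thesis by (auto simp: toeplitz_params_def)
  qed
qed

lemma toeplitz_params_if_recurrence:
  assumes "0 < c" "0 < d" "toeplitz_recurrence a b c d"
  shows "(a, b, c, d) \<in> toeplitz_params"
proof -
  have reflected_eq_0:
    "beta_clear (reflect_poly \<circ> lam_num_shift a b c d) (reflect_poly \<circ> lam_den_shift c d) = 0"
    "gamma_clear (reflect_poly \<circ> lam_num_shift a b c d) (reflect_poly \<circ> lam_den_shift c d) = 0"
    using clear_eq_0_if_toeplitz_recurrence[OF assms] reflect_clear_eq_0 degree_lam_shift by blast+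
  then have d: "d = c + 1/2"
    using coeff_reflect_beta_clear_1[of a b c d] by simp
  show ?thesis
    using reflected_eq_0 coeff_reflect_clear_2_3[of a b c] unfolding d
    by (intro toeplitz_params_if_coeff_equations) (auto simp: algebra_simps)
qed

theorem theorem13:
  fixes a b c d :: real
  assumes "a > 0" "b > 0" "c > 0" "d > 0"
  shows "(\<forall>n::nat. n \<ge> 1 \<longrightarrow>
            beta_rc a b c d n = 3 * (4/27) \<and>
            alpha_rc a b c d (n+1) = 3 * (4/27)^2 \<and>
            gamma_rc a b c d (n+1) = (4/27)^3)
     \<longleftrightarrow> (a, b, c, d) \<in> {(1/3, 2/3, 1/2, 1), (2/3, 1/3, 1/2, 1),
                         (1/3, 2/3, 1, 3/2), (2/3, 1/3, 1, 3/2),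
                         (2/3, 4/3, 1, 3/2), (4/3, 2/3, 1, 3/2),
                         (2/3, 4/3, 3/2, 2), (4/3, 2/3, 3/2, 2),
                         (4/3, 5/3, 3/2, 2), (5/3, 4/3, 3/2, 2),
                         (4/3, 5/3, 2, 5/2), (5/3, 4/3, 2, 5/2)}"
  unfolding toeplitz_recurrence_def[symmetric] toeplitz_params_def[symmetric]
  using toeplitz_params_if_recurrence toeplitz_recurrence_if_params assms(3,4) by blast

end
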